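(* Let $\oplus$ be a combinator whose domain is contained in $V(W)$. Then $\oplus$ is a TeamQueue combinator if and only if $\oplus$ is basic and satisfies, for every pair $\langle\preceq_1,\preceq_2\rangle$ in its domain and all $x,y,z \in W$: ($\oplus$SPU+) if $x \prec_1 y$ and $z \prec_2 y$ then $x \prec_{1\oplus 2} y$ or $z \prec_{1\oplus 2} y$; ($\oplus$WPU+) if $x \preceq_1 y$ and $z \preceq_2 y$ then $x \preceq_{1\oplus 2} y$ or $z \preceq_{1\oplus 2} y$.
   Context: $W$ is a finite nonempty set (of possible worlds). A tpo is a total preorder on $W$; $\prec$ is its strict part. For $S \subseteq W$, $\min(\preceq, S) = \{x \in S : x \preceq y \text{ for all } y \in S\}$. Two tpos $\preceq_1, \preceq_2$ are $S$-variants ($S \subseteq W$) if $x \preceq_1 y \iff x \preceq_2 y$ for all $(x,y) \in (S\times S) \cup (S^c \times S^c)$; $V(W)$ is the set of pairs $\langle\preceq_1,\preceq_2\rangle$ of tpos that are $S$-variants for some $S \subseteq W$. A combinator $\oplus$ maps pairs of tpos in its domain to a tpo $\preceq_{1\oplus 2}$. It is basic if $\min(\preceq_{1\oplus 2}, W) = \min(\preceq_1, W) \cup \min(\preceq_2, W)$ for every pair in its domain. $\oplus$ is a TeamQueue combinator if for each pair $\langle\preceq_1,\preceq_2\rangle$ in its domain there is a sequence $\langle a(i)\rangle_{i \in \mathbb{N}}$ with $\emptyset \neq a(i) \subseteq \{1,2\}$ and $a(1) = \{1,2\}$, such that $\preceq_{1\oplus 2}$ is the tpo with ordered partition into ranks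 (most plausible first) $\langle T_1, \ldots, T_m\rangle$, where $T_i = \bigcup_{j \in a(i)} \min(\preceq_j, \bigcap_{k<i} T_k^c)$ and $m$ is minimal with $\bigcup_{i \le m} T_i = W$. *)

theory Defs
  imports Main
begin

text \<open>Plausibility orders are relations on a finite carrier W; (x,y) in R means x is at
least as plausible as y.\<close>

definition tpo :: "'a set \<Rightarrow> 'a rel \<Rightarrow> bool" where
  "tpo W R \<longleftrightarrow> R \<subseteq> W \<times> W \<and> (\<forall>x\<in>W. (x,x) \<in> R)
     \<and> (\<forall>x y z. (x,y) \<in> R \<longrightarrow> (y,z) \<in> R \<longrightarrow> (x,z) \<in> R)
     \<and> (\<forall>x\<in>W. \<forall>y\<in>W. (x,y) \<in> R \<or> (y,x) \<in> R)"

definition strict :: "'a rel \<Rightarrow> 'a \<Rightarrow> 'a \<Rightarrow> bool" where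
  "strict R x y \<longleftrightarrow> (x,y) \<in> R \<and> (y,x) \<notin> R"

definition minset :: "'a rel \<Rightarrow> 'a set \<Rightarrow> 'a set" where
  "minset R S = {x \<in> S. \<forall>y\<in>S. (x,y) \<in> R}"

definition variants :: "'a set \<Rightarrow> 'a set \<Rightarrow> 'a rel \<Rightarrow> 'a rel \<Rightarrow> bool" where
  "variants W S R1 R2 \<longleftrightarrow>
     (\<forall>x y. (x,y) \<in> (S \<times> S) \<union> ((W - S) \<times> (W - S)) \<longrightarrow> ((x,y) \<in> R1 \<longleftrightarrow> (x,y) \<in> R2))"

definition Vpairs :: "'a set \<Rightarrow> ('a rel \<times> 'a rel) set" where
  "Vpairs W = {(R1,R2). tpo W R1 \<and> tpo W R2 \<and> (\<exists>S\<subseteq>W. variants W S R1 R2)}"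

definition combinator :: "'a set \<Rightarrow> ('a rel \<times> 'a rel) set \<Rightarrow> ('a rel \<Rightarrow> 'a rel \<Rightarrow> 'a rel) \<Rightarrow> bool" where
  "combinator W D f \<longleftrightarrow> (\<forall>(R1,R2)\<in>D. tpo W (f R1 R2))"

definition basic :: "'a set \<Rightarrow> ('a rel \<times> 'a rel) set \<Rightarrow> ('a rel \<Rightarrow> 'a rel \<Rightarrow> 'a rel) \<Rightarrow> bool" where
  "basic W D f \<longleftrightarrow> (\<forall>(R1,R2)\<in>D. minset (f R1 R2) W = minset R1 W \<union> minset R2 W)"

definition sel :: "'a rel \<Rightarrow> 'a rel \<Rightarrow> nat \<Rightarrow> 'a rel" where
  "sel R1 R2 j = (if j = 1 then R1 else R2)"

primrec tq_rem :: "'a set \<Rightarrow> 'a rel \<Rightarrow> 'a rel \<Rightarrow> (nat \<Rightarrow> nat set) \<Rightarrow> nat \<Rightarrow> 'a set" where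
  "tq_rem W R1 R2 a 0 = W"
| "tq_rem W R1 R2 a (Suc n) = tq_rem W R1 R2 a n -
     (\<Union>j\<in>a (Suc n). minset (sel R1 R2 j) (tq_rem W R1 R2 a n))"

definition tq_rank :: "'a set \<Rightarrow> 'a rel \<Rightarrow> 'a rel \<Rightarrow> (nat \<Rightarrow> nat set) \<Rightarrow> nat \<Rightarrow> 'a set" where
  "tq_rank W R1 R2 a i = (\<Union>j\<in>a i. minset (sel R1 R2 j) (tq_rem W R1 R2 a (i - 1)))"

definition tq_order :: "'a set \<Rightarrow> 'a rel \<Rightarrow> 'a rel \<Rightarrow> (nat \<Rightarrow> nat set) \<Rightarrow> nat \<Rightarrow> 'a rel" where
  "tq_order W R1 R2 a m = {(x,y). \<exists>i j. 1 \<le> i \<and> i \<le> j \<and> j \<le> m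
       \<and> x \<in> tq_rank W R1 R2 a i \<and> y \<in> tq_rank W R1 R2 a j}"

definition covers_at :: "'a set \<Rightarrow> 'a rel \<Rightarrow> 'a rel \<Rightarrow> (nat \<Rightarrow> nat set) \<Rightarrow> nat \<Rightarrow> bool" where
  "covers_at W R1 R2 a m \<longleftrightarrow> (\<Union>i\<in>{1..m}. tq_rank W R1 R2 a i) = W"

definition teamqueue :: "'a set \<Rightarrow> ('a rel \<times> 'a rel) set \<Rightarrow> ('a rel \<Rightarrow> 'a rel \<Rightarrow> 'a rel) \<Rightarrow> bool" where
  "teamqueue W D f \<longleftrightarrow> (\<forall>(R1,R2)\<in>D. \<exists>a :: nat \<Rightarrow> nat set.
      (\<forall>i\<ge>1. a i \<noteq> {} \<and> a i \<subseteq> {1,2}) \<and> a 1 = {1,2} \<and>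
      (\<exists>m. covers_at W R1 R2 a m \<and> (\<forall>m'<m. \<not> covers_at W R1 R2 a m')
           \<and> f R1 R2 = tq_order W R1 R2 a m))"

definition SPU_plus :: "'a set \<Rightarrow> ('a rel \<times> 'a rel) set \<Rightarrow> ('a rel \<Rightarrow> 'a rel \<Rightarrow> 'a rel) \<Rightarrow> bool" where
  "SPU_plus W D f \<longleftrightarrow> (\<forall>(R1,R2)\<in>D. \<forall>x\<in>W. \<forall>y\<in>W. \<forall>z\<in>W.
      strict R1 x y \<and> strict R2 z y \<longrightarrow> strict (f R1 R2) x y \<or> strict (f R1 R2) z y)"

definition WPU_plus :: "'a set \<Rightarrow> ('a rel \<times> 'a rel) set \<Rightarrow> ('a rel \<Rightarrow> 'a rel \<Rightarrow> 'a rel) \<Rightarrow> bool" where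
  "WPU_plus W D f \<longleftrightarrow> (\<forall>(R1,R2)\<in>D. \<forall>x\<in>W. \<forall>y\<in>W. \<forall>z\<in>W.
      (x,y) \<in> R1 \<and> (z,y) \<in> R2 \<longrightarrow> (x,y) \<in> f R1 R2 \<or> (z,y) \<in> f R1 R2)"

end

theory Submission
  imports Defs
begin

text \<open>A world \<open>y\<close> enters rank \<open>j\<close> of a TeamQueue order because it is minimal,
  among the worlds not yet ranked, for some input order \<open>R\<^sub>k\<close> with \<open>k \<in> a(j)\<close>.
  Everything \<open>R\<^sub>k\<close>-below \<open>y\<close> is therefore ranked no later than \<open>y\<close>, and
  everything strictly \<open>R\<^sub>k\<close>-below \<open>y\<close> strictly earlier; this gives WPU+ and SPU+,
  and basicness is the equation \<open>T\<^sub>1 = min R\<^sub>1 \<union> min R\<^sub>2\<close>.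

  Conversely, let \<open>R\<close> satisfy the three conditions. For every set \<open>A\<close> of worlds,
  \<open>min(R, A)\<close> is the union of those \<open>min(R\<^sub>j, A)\<close> that it contains: SPU+ puts
  each \<open>R\<close>-minimal world into \<open>min(R\<^sub>1, A) \<union> min(R\<^sub>2, A)\<close>, and WPU+
  together with \<open>R\<^sub>1, R\<^sub>2\<close> being \<open>S\<close>-variants shows that when one of these two
  sets is not contained in \<open>min(R, A)\<close>, the other one is and contains the given world.
  Letting \<open>a(i)\<close> consist of the inputs whose minimal remaining worlds are
  \<open>R\<close>-minimal, the TeamQueue ranks are exactly the successive layers of \<open>R\<close>.\<close>

lemma tpo_subset: "tpo W R \<Longrightarrow> R \<subseteq> W \<times> W"
  unfolding tpo_def by blast

lemma tpo_refl: "tpo W R \<Longrightarrow> x \<in> W \<Longrightarrow> (x, x) \<in> R"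
  unfolding tpo_def by blast

lemma tpo_trans: "tpo W R \<Longrightarrow> (x, y) \<in> R \<Longrightarrow> (y, z) \<in> R \<Longrightarrow> (x, z) \<in> R"
  unfolding tpo_def by blast

lemma tpo_total: "tpo W R \<Longrightarrow> x \<in> W \<Longrightarrow> y \<in> W \<Longrightarrow> (x, y) \<in> R \<or> (y, x) \<in> R"
  unfolding tpo_def by blast

lemma minset_subset: "minset R A \<subseteq> A"
  by (auto simp: minset_def)

lemma minsetD: "x \<in> minset R A \<Longrightarrow> y \<in> A \<Longrightarrow> (x, y) \<in> R"
  by (auto simp: minset_def)

lemma minset_closed_below:
  "tpo W R \<Longrightarrow> y \<in> minset R A \<Longrightarrow> x \<in> A \<Longrightarrow> (x, y) \<in> R \<Longrightarrow> x \<in> minset R A"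
  unfolding minset_def by (blast intro: tpo_trans)

lemma minset_nonempty:
  assumes "tpo W R" and "finite A" and "A \<subseteq> W" and "A \<noteq> {}"
  shows "minset R A \<noteq> {}"
  using assms(2,4,3)
proof (induction A rule: finite_ne_induct)
  case (singleton x)
  then show ?case
    using tpo_refl[OF assms(1)] by (auto simp: minset_def)
next
  case (insert a F)
  then obtain m where m: "m \<in> minset R F" by auto
  have "a \<in> W" "m \<in> W"
    using insert.prems m minset_subset[of R F] by auto
  then consider "(a, m) \<in> R" | "(m, a) \<in> R"
    using tpo_total[OF assms(1)] by blast
  then show ?case
  proof cases
    case 1
    then have "a \<in> minset R (insert a F)"
      using m \<open>a \<in> W\<close> tpo_refl[OF assms(1)] tpo_trans[OF assms(1) 1 minsetD[OF m]]
      by (auto simp: minset_def)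
    then show ?thesis by blast
  next
    case 2
    then have "m \<in> minset R (insert a F)"
      using m by (auto simp: minset_def)
    then show ?thesis by blast
  qed
qed

lemma variantsD:
  "variants W S R1 R2 \<Longrightarrow> x \<in> W \<Longrightarrow> y \<in> W \<Longrightarrow> (x \<in> S \<longleftrightarrow> y \<in> S)
    \<Longrightarrow> (x, y) \<in> R1 \<longleftrightarrow> (x, y) \<in> R2"
  unfolding variants_def by blast

lemma decreasing_chain_reaches_empty:
  assumes "finite (A 0)" and "\<And>n. A n \<noteq> {} \<Longrightarrow> A (Suc n) \<subset> A n"
  shows "\<exists>n. A n = {}"
proof (rule ccontr)
  assume "\<nexists>n. A n = {}"
  then have "finite (A n) \<and> card (A n) + n \<le> card (A 0)" for n
  proof (induction n)
    case (Suc n)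
    then have "A (Suc n) \<subset> A n" using assms(2) by blast
    with Suc show ?case
      using psubset_card_mono[of "A n" "A (Suc n)"] finite_subset[of "A (Suc n)" "A n"] by auto
  qed (use assms(1) in simp)
  from this[of "Suc (card (A 0))"] show False by simp
qed

section \<open>Ranks of a TeamQueue sequence\<close>

lemma tq_rem_Suc:
  "tq_rem W R1 R2 a (Suc n) = tq_rem W R1 R2 a n - tq_rank W R1 R2 a (Suc n)"
  by (simp add: tq_rank_def)

lemma tq_rem_subset: "tq_rem W R1 R2 a n \<subseteq> W"
  by (induction n) auto

lemma tq_rem_antimono: "i \<le> j \<Longrightarrow> tq_rem W R1 R2 a j \<subseteq> tq_rem W R1 R2 a i"
  by (rule lift_Suc_antimono_le[of "tq_rem W R1 R2 a"]) auto

lemma tq_rank_subset_rem: "tq_rank W R1 R2 a i \<subseteq> tq_rem W R1 R2 a (i - 1)"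
  by (auto simp: tq_rank_def minset_def)

lemma tq_rank_subset: "tq_rank W R1 R2 a i \<subseteq> W"
  using tq_rank_subset_rem tq_rem_subset by (rule order_trans)

lemma tq_rem_eq_Diff_ranks:
  "tq_rem W R1 R2 a n = W - (\<Union>i\<in>{1..n}. tq_rank W R1 R2 a i)"
proof (induction n)
  case (Suc n)
  have "{1..Suc n} = insert (Suc n) {1..n}" by auto
  then have ranks_Suc: "(\<Union>i\<in>{1..Suc n}. tq_rank W R1 R2 a i)
      = tq_rank W R1 R2 a (Suc n) \<union> (\<Union>i\<in>{1..n}. tq_rank W R1 R2 a i)"
    by simp
  show ?case
    unfolding tq_rem_Suc Suc.IH ranks_Suc by auto
qed simp

lemma covers_at_iff_tq_rem_empty:
  "covers_at W R1 R2 a n \<longleftrightarrow> tq_rem W R1 R2 a n = {}"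
proof -
  let ?U = "\<Union>i\<in>{1..n}. tq_rank W R1 R2 a i"
  have "?U \<subseteq> W"
    by (intro UN_least tq_rank_subset)
  then have "?U = W \<longleftrightarrow> W - ?U = {}"
    by blast
  then show ?thesis
    by (simp only: covers_at_def tq_rem_eq_Diff_ranks[of W R1 R2 a n])
qed

lemma covers_atE:
  assumes "covers_at W R1 R2 a m" and "x \<in> W"
  obtains i where "1 \<le> i" "i \<le> m" "x \<in> tq_rank W R1 R2 a i"
proof -
  from assms(1) have "(\<Union>i\<in>{1..m}. tq_rank W R1 R2 a i) = W"
    unfolding covers_at_def .
  with assms(2) have "x \<in> (\<Union>i\<in>{1..m}. tq_rank W R1 R2 a i)"
    by (simp only:)
  then obtain i where "i \<in> {1..m}" "x \<in> tq_rank W R1 R2 a i" ..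
  then show thesis by (intro that) auto
qed

lemma tq_rank_disjoint_rem:
  assumes "1 \<le> i"
  shows "tq_rank W R1 R2 a i \<inter> tq_rem W R1 R2 a i = {}"
proof -
  obtain n where "i = Suc n"
    using assms by (cases i) auto
  then show ?thesis
    by (auto simp: tq_rank_def)
qed

lemma tq_rank_le_if_in_rem:
  assumes "1 \<le> i" "x \<in> tq_rank W R1 R2 a i" "x \<in> tq_rem W R1 R2 a (j - 1)"
  shows "j \<le> i"
proof (rule ccontr)
  assume "\<not> j \<le> i"
  then have "tq_rem W R1 R2 a (j - 1) \<subseteq> tq_rem W R1 R2 a i"
    by (intro tq_rem_antimono) simp
  moreover have "tq_rank W R1 R2 a i \<inter> tq_rem W R1 R2 a i = {}"
    using assms(1) by (rule tq_rank_disjoint_rem)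
  ultimately show False
    using assms(2,3) by blast
qed

lemma tq_rank_unique:
  assumes "1 \<le> i" "1 \<le> j" "x \<in> tq_rank W R1 R2 a i" "x \<in> tq_rank W R1 R2 a j"
  shows "i = j"
proof -
  have "j \<le> i"
    using tq_rank_le_if_in_rem[OF assms(1,3)] tq_rank_subset_rem[of W R1 R2 a j] assms(4)
    by blast
  moreover have "i \<le> j"
    using tq_rank_le_if_in_rem[OF assms(2,4)] tq_rank_subset_rem[of W R1 R2 a i] assms(3)
    by blast
  ultimately show ?thesis by simp
qed

lemma mem_tq_order_iff:
  assumes "1 \<le> i" "i \<le> m" "1 \<le> j" "j \<le> m"
    and "x \<in> tq_rank W R1 R2 a i" "y \<in> tq_rank W R1 R2 a j"
  shows "(x, y) \<in> tq_order W R1 R2 a m \<longleftrightarrow> i \<le> j"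
proof
  assume "(x, y) \<in> tq_order W R1 R2 a m"
  then obtain i' j' where "1 \<le> i'" "i' \<le> j'"
    "x \<in> tq_rank W R1 R2 a i'" "y \<in> tq_rank W R1 R2 a j'"
    unfolding tq_order_def by blast
  with assms show "i \<le> j"
    using tq_rank_unique[of i i' x W R1 R2 a] tq_rank_unique[of j j' y W R1 R2 a] by auto
next
  assume "i \<le> j"
  then show "(x, y) \<in> tq_order W R1 R2 a m"
    using assms unfolding tq_order_def by blast
qed

lemma tq_rank_1: "a 1 = {1, 2} \<Longrightarrow> tq_rank W R1 R2 a 1 = minset R1 W \<union> minset R2 W"
  by (simp add: tq_rank_def sel_def)

lemma minset_sel_subset_tq_rank:
  "k \<in> a j \<Longrightarrow> minset (sel R1 R2 k) (tq_rem W R1 R2 a (j - 1)) \<subseteq> tq_rank W R1 R2 a j"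
  by (auto simp: tq_rank_def)

section \<open>TeamQueue orders are basic and satisfy SPU+ and WPU+\<close>

definition queue_schedule :: "(nat \<Rightarrow> nat set) \<Rightarrow> bool" where
  "queue_schedule a \<longleftrightarrow> (\<forall>i\<ge>1. a i \<noteq> {} \<and> a i \<subseteq> {1, 2}) \<and> a 1 = {1, 2}"

definition teamqueue_order :: "'a set \<Rightarrow> 'a rel \<Rightarrow> 'a rel \<Rightarrow> 'a rel \<Rightarrow> bool" where
  "teamqueue_order W R1 R2 R \<longleftrightarrow> (\<exists>a. queue_schedule a \<and> (\<exists>m. covers_at W R1 R2 a m
     \<and> (\<forall>m'<m. \<not> covers_at W R1 R2 a m') \<and> R = tq_order W R1 R2 a m))"

definition SPU_pair :: "'a set \<Rightarrow> 'a rel \<Rightarrow> 'a rel \<Rightarrow> 'a rel \<Rightarrow> bool" where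
  "SPU_pair W R1 R2 R \<longleftrightarrow> (\<forall>x\<in>W. \<forall>y\<in>W. \<forall>z\<in>W.
     strict R1 x y \<and> strict R2 z y \<longrightarrow> strict R x y \<or> strict R z y)"

definition WPU_pair :: "'a set \<Rightarrow> 'a rel \<Rightarrow> 'a rel \<Rightarrow> 'a rel \<Rightarrow> bool" where
  "WPU_pair W R1 R2 R \<longleftrightarrow> (\<forall>x\<in>W. \<forall>y\<in>W. \<forall>z\<in>W.
     (x, y) \<in> R1 \<and> (z, y) \<in> R2 \<longrightarrow> (x, y) \<in> R \<or> (z, y) \<in> R)"

lemma teamqueue_iff_pairwise:
  "teamqueue W D f \<longleftrightarrow> (\<forall>(R1, R2)\<in>D. teamqueue_order W R1 R2 (f R1 R2))"
  unfolding teamqueue_def teamqueue_order_def queue_schedule_def by simp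

lemma SPU_plus_iff_pairwise: "SPU_plus W D f \<longleftrightarrow> (\<forall>(R1, R2)\<in>D. SPU_pair W R1 R2 (f R1 R2))"
  unfolding SPU_plus_def SPU_pair_def ..

lemma WPU_plus_iff_pairwise: "WPU_plus W D f \<longleftrightarrow> (\<forall>(R1, R2)\<in>D. WPU_pair W R1 R2 (f R1 R2))"
  unfolding WPU_plus_def WPU_pair_def ..

lemma covers_at_chosenE:
  assumes "covers_at W R1 R2 a m" and "queue_schedule a" and "y \<in> W"
  obtains j k where "1 \<le> j" "j \<le> m" "k = 1 \<or> k = 2" "k \<in> a j"
    "y \<in> minset (sel R1 R2 k) (tq_rem W R1 R2 a (j - 1))"
proof -
  obtain j where j: "1 \<le> j" "j \<le> m" "y \<in> tq_rank W R1 R2 a j"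
    using assms(1,3) by (rule covers_atE)
  then obtain k where k: "k \<in> a j" "y \<in> minset (sel R1 R2 k) (tq_rem W R1 R2 a (j - 1))"
    unfolding tq_rank_def by blast
  have "a j \<subseteq> {1, 2}"
    using assms(2) j(1) unfolding queue_schedule_def by blast
  with k(1) have "k = 1 \<or> k = 2" by blast
  show thesis
    using j(1,2) \<open>k = 1 \<or> k = 2\<close> k by (rule that)
qed

lemma tq_order_if_below_chosen:
  assumes cover: "covers_at W R1 R2 a m" and "tpo W Q" and j: "1 \<le> j" "j \<le> m"
    and chosen: "minset Q (tq_rem W R1 R2 a (j - 1)) \<subseteq> tq_rank W R1 R2 a j"
    and y: "y \<in> minset Q (tq_rem W R1 R2 a (j - 1))"
    and "x \<in> W" and "(x, y) \<in> Q"
  shows "(x, y) \<in> tq_order W R1 R2 a m"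
proof -
  obtain i where i: "1 \<le> i" "i \<le> m" "x \<in> tq_rank W R1 R2 a i"
    using cover \<open>x \<in> W\<close> by (rule covers_atE)
  have "i \<le> j"
  proof (rule ccontr)
    assume "\<not> i \<le> j"
    then have "tq_rem W R1 R2 a (i - 1) \<subseteq> tq_rem W R1 R2 a (j - 1)"
      by (intro tq_rem_antimono) simp
    then have "x \<in> tq_rem W R1 R2 a (j - 1)"
      using i(3) tq_rank_subset_rem[of W R1 R2 a i] by blast
    then have "x \<in> tq_rank W R1 R2 a j"
      using minset_closed_below[OF \<open>tpo W Q\<close> y _ \<open>(x, y) \<in> Q\<close>] chosen by blast
    then show False
      using tq_rank_unique[OF i(1) j(1) i(3)] \<open>\<not> i \<le> j\<close> by simp
  qed
  moreover have "y \<in> tq_rank W R1 R2 a j"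
    using chosen y by blast
  ultimately show ?thesis
    using mem_tq_order_iff[OF i(1,2) j i(3)] by blast
qed

lemma strict_tq_order_if_strictly_below_chosen:
  assumes cover: "covers_at W R1 R2 a m" and j: "1 \<le> j" "j \<le> m"
    and "y \<in> tq_rank W R1 R2 a j" and y: "y \<in> minset Q (tq_rem W R1 R2 a (j - 1))"
    and "x \<in> W" and "strict Q x y"
  shows "strict (tq_order W R1 R2 a m) x y"
proof -
  obtain i where i: "1 \<le> i" "i \<le> m" "x \<in> tq_rank W R1 R2 a i"
    using cover \<open>x \<in> W\<close> by (rule covers_atE)
  have "i < j"
  proof (rule ccontr)
    assume "\<not> i < j"
    then have "tq_rem W R1 R2 a (i - 1) \<subseteq> tq_rem W R1 R2 a (j - 1)"
      by (intro tq_rem_antimono) simp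
    then have "x \<in> tq_rem W R1 R2 a (j - 1)"
      using i(3) tq_rank_subset_rem[of W R1 R2 a i] by blast
    then have "(y, x) \<in> Q"
      by (rule minsetD[OF y])
    then show False
      using \<open>strict Q x y\<close> unfolding strict_def by blast
  qed
  then show ?thesis
    unfolding strict_def
    using mem_tq_order_iff[OF i(1,2) j i(3) \<open>y \<in> tq_rank W R1 R2 a j\<close>]
      mem_tq_order_iff[OF j i(1,2) \<open>y \<in> tq_rank W R1 R2 a j\<close> i(3)] by simp
qed

lemma minset_tq_order:
  assumes cover: "covers_at W R1 R2 a m" and "queue_schedule a"
    and "tpo W R1" and "finite W" and "W \<noteq> {}"
  shows "minset (tq_order W R1 R2 a m) W = minset R1 W \<union> minset R2 W"
proof -
  have rank_1: "tq_rank W R1 R2 a 1 = minset R1 W \<union> minset R2 W"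
    using \<open>queue_schedule a\<close> unfolding queue_schedule_def by (intro tq_rank_1) blast
  show ?thesis
  proof (intro equalityI subsetI)
    fix x
    assume x: "x \<in> minset (tq_order W R1 R2 a m) W"
    obtain y where y: "y \<in> minset R1 W"
      using minset_nonempty[OF \<open>tpo W R1\<close> \<open>finite W\<close> subset_refl \<open>W \<noteq> {}\<close>] by blast
    then have "(x, y) \<in> tq_order W R1 R2 a m"
      using x minset_subset[of R1 W] by (blast intro: minsetD)
    then obtain i j where "1 \<le> i" "i \<le> j"
      "x \<in> tq_rank W R1 R2 a i" "y \<in> tq_rank W R1 R2 a j"
      unfolding tq_order_def by blast
    moreover have "y \<in> tq_rank W R1 R2 a 1"
      using y rank_1 by blast
    ultimately have "x \<in> tq_rank W R1 R2 a 1"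
      using tq_rank_unique[of j 1 y W R1 R2 a] by simp
    then show "x \<in> minset R1 W \<union> minset R2 W"
      using rank_1 by simp
  next
    fix x
    assume x: "x \<in> minset R1 W \<union> minset R2 W"
    have "(x, y) \<in> tq_order W R1 R2 a m" if "y \<in> W" for y
    proof -
      obtain j where "1 \<le> j" "j \<le> m" "y \<in> tq_rank W R1 R2 a j"
        using cover \<open>y \<in> W\<close> by (rule covers_atE)
      then show ?thesis
        using x rank_1 unfolding tq_order_def by force
    qed
    moreover have "x \<in> W"
      using x minset_subset[of R1 W] minset_subset[of R2 W] by blast
    ultimately show "x \<in> minset (tq_order W R1 R2 a m) W"
      unfolding minset_def by blast
  qed
qed

lemma SPU_pair_tq_order:
  assumes cover: "covers_at W R1 R2 a m" and "queue_schedule a"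
  shows "SPU_pair W R1 R2 (tq_order W R1 R2 a m)"
  unfolding SPU_pair_def
proof (intro ballI impI)
  fix x y z
  assume "x \<in> W" "y \<in> W" "z \<in> W" and strict: "strict R1 x y \<and> strict R2 z y"
  obtain j k where j: "1 \<le> j" "j \<le> m" and "k = 1 \<or> k = 2" "k \<in> a j"
    and y: "y \<in> minset (sel R1 R2 k) (tq_rem W R1 R2 a (j - 1))"
    using cover \<open>queue_schedule a\<close> \<open>y \<in> W\<close> by (rule covers_at_chosenE)
  have "y \<in> tq_rank W R1 R2 a j"
    using minset_sel_subset_tq_rank[of k a j R1 R2 W] \<open>k \<in> a j\<close> y by blast
  note strict_tq_order = strict_tq_order_if_strictly_below_chosen[OF cover j this]
  from \<open>k = 1 \<or> k = 2\<close>
  show "strict (tq_order W R1 R2 a m) x y \<or> strict (tq_order W R1 R2 a m) z y"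
  proof
    assume "k = 1"
    then show ?thesis
      using strict_tq_order[of R1 x] y \<open>x \<in> W\<close> strict by (simp add: sel_def)
  next
    assume "k = 2"
    then show ?thesis
      using strict_tq_order[of R2 z] y \<open>z \<in> W\<close> strict by (simp add: sel_def)
  qed
qed

lemma WPU_pair_tq_order:
  assumes cover: "covers_at W R1 R2 a m" and "queue_schedule a"
    and "tpo W R1" and "tpo W R2"
  shows "WPU_pair W R1 R2 (tq_order W R1 R2 a m)"
  unfolding WPU_pair_def
proof (intro ballI impI)
  fix x y z
  assume "x \<in> W" "y \<in> W" "z \<in> W" and below: "(x, y) \<in> R1 \<and> (z, y) \<in> R2"
  obtain j k where j: "1 \<le> j" "j \<le> m" and "k = 1 \<or> k = 2" "k \<in> a j"
    and y: "y \<in> minset (sel R1 R2 k) (tq_rem W R1 R2 a (j - 1))"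
    using cover \<open>queue_schedule a\<close> \<open>y \<in> W\<close> by (rule covers_at_chosenE)
  have chosen: "minset (sel R1 R2 k) (tq_rem W R1 R2 a (j - 1)) \<subseteq> tq_rank W R1 R2 a j"
    using \<open>k \<in> a j\<close> by (rule minset_sel_subset_tq_rank)
  from \<open>k = 1 \<or> k = 2\<close>
  show "(x, y) \<in> tq_order W R1 R2 a m \<or> (z, y) \<in> tq_order W R1 R2 a m"
  proof
    assume "k = 1"
    then show ?thesis
      using tq_order_if_below_chosen[OF cover \<open>tpo W R1\<close> j, of y x] chosen y \<open>x \<in> W\<close> below
      by (simp add: sel_def)
  next
    assume "k = 2"
    then show ?thesis
      using tq_order_if_below_chosen[OF cover \<open>tpo W R2\<close> j, of y z] chosen y \<open>z \<in> W\<close> below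
      by (simp add: sel_def)
  qed
qed

lemma teamqueue_order_imp_basic_SPU_WPU:
  assumes "teamqueue_order W R1 R2 R" and "tpo W R1" and "tpo W R2" and "finite W" and "W \<noteq> {}"
  shows "minset R W = minset R1 W \<union> minset R2 W \<and> SPU_pair W R1 R2 R \<and> WPU_pair W R1 R2 R"
proof -
  obtain a m where sched: "queue_schedule a" and cover: "covers_at W R1 R2 a m"
    and "R = tq_order W R1 R2 a m"
    using assms(1) unfolding teamqueue_order_def by blast
  then show ?thesis
    using minset_tq_order[OF cover sched assms(2,4,5)] SPU_pair_tq_order[OF cover sched]
      WPU_pair_tq_order[OF cover sched assms(2,3)] by simp
qed

section \<open>Basic combinators satisfying SPU+ and WPU+ are TeamQueue\<close>

lemma minset_subset_Un_if_SPU: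
  assumes "tpo W R1" and "tpo W R2" and "A \<subseteq> W" and "SPU_pair W R1 R2 R"
  shows "minset R A \<subseteq> minset R1 A \<union> minset R2 A"
proof
  fix y
  assume y: "y \<in> minset R A"
  then have "y \<in> A"
    using minset_subset[of R A] by blast
  show "y \<in> minset R1 A \<union> minset R2 A"
  proof (rule ccontr)
    assume "y \<notin> minset R1 A \<union> minset R2 A"
    then obtain x z where "x \<in> A" "(y, x) \<notin> R1" "z \<in> A" "(y, z) \<notin> R2"
      using \<open>y \<in> A\<close> unfolding minset_def by blast
    moreover have "x \<in> W" "y \<in> W" "z \<in> W"
      using \<open>x \<in> A\<close> \<open>y \<in> A\<close> \<open>z \<in> A\<close> \<open>A \<subseteq> W\<close> by blast+
    ultimately have "strict R1 x y" "strict R2 z y"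
      using tpo_total[OF \<open>tpo W R1\<close>, of x y] tpo_total[OF \<open>tpo W R2\<close>, of z y]
      unfolding strict_def by blast+
    then have "strict R x y \<or> strict R z y"
      using \<open>SPU_pair W R1 R2 R\<close> \<open>x \<in> W\<close> \<open>y \<in> W\<close> \<open>z \<in> W\<close>
      unfolding SPU_pair_def by blast
    moreover have "(y, x) \<in> R" "(y, z) \<in> R"
      using minsetD[OF y] \<open>x \<in> A\<close> \<open>z \<in> A\<close> by blast+
    ultimately show False
      unfolding strict_def by blast
  qed
qed

text \<open>A world outside \<open>minset R A\<close> that is
  \<open>P\<close>-minimal forces, via WPU+, every world weakly \<open>Q\<close>-below \<open>y\<close> into
  \<open>minset R A\<close>; if \<open>y\<close> itself were not \<open>Q\<close>-minimal, some \<open>Q\<close>-minimal world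
  would lie on the same side of \<open>S\<close> as one of two \<open>P\<close>-minimal worlds on opposite
  sides, contradicting that \<open>P\<close> and \<open>Q\<close> agree there.\<close>
lemma minset_other_subset_if_WPU:
  assumes "tpo W P" and "tpo W Q" and "tpo W R" and "finite W" and "A \<subseteq> W"
    and agree: "\<And>x y. x \<in> W \<Longrightarrow> y \<in> W \<Longrightarrow> (x \<in> S \<longleftrightarrow> y \<in> S) \<Longrightarrow> (x, y) \<in> P \<longleftrightarrow> (x, y) \<in> Q"
    and WPU: "\<And>x y z. x \<in> W \<Longrightarrow> y \<in> W \<Longrightarrow> z \<in> W \<Longrightarrow> (x, y) \<in> P \<Longrightarrow> (z, y) \<in> Q
      \<Longrightarrow> (x, y) \<in> R \<or> (z, y) \<in> R"
    and yR: "y \<in> minset R A" and yP: "y \<in> minset P A"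
    and "\<not> minset P A \<subseteq> minset R A"
  shows "y \<in> minset Q A \<and> minset Q A \<subseteq> minset R A"
proof -
  obtain x where xP: "x \<in> minset P A" and xR: "x \<notin> minset R A"
    using \<open>\<not> minset P A \<subseteq> minset R A\<close> by blast
  have "x \<in> A" "y \<in> A"
    using xP yP minset_subset[of P A] by blast+
  then have "x \<in> W" "y \<in> W"
    using \<open>A \<subseteq> W\<close> by blast+
  have "(x, y) \<in> P"
    using minsetD[OF xP \<open>y \<in> A\<close>] .
  have "(x, y) \<notin> R"
    using minset_closed_below[OF \<open>tpo W R\<close> yR \<open>x \<in> A\<close>] xR by blast
  have below_y: "w \<in> minset R A" if "w \<in> A" "(w, y) \<in> Q" for w
  proof -
    have "(w, y) \<in> R"
      using WPU[OF \<open>x \<in> W\<close> \<open>y \<in> W\<close> _ \<open>(x, y) \<in> P\<close> \<open>(w, y) \<in> Q\<close>] \<open>w \<in> A\<close> \<open>A \<subseteq> W\<close>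
        \<open>(x, y) \<notin> R\<close> by blast
    then show ?thesis
      by (rule minset_closed_below[OF \<open>tpo W R\<close> yR \<open>w \<in> A\<close>])
  qed
  have "x \<notin> minset Q A"
    using below_y[OF \<open>x \<in> A\<close>] xR minsetD[of x Q A y] \<open>y \<in> A\<close> by blast
  have "y \<in> minset Q A"
  proof (rule ccontr)
    assume "y \<notin> minset Q A"
    obtain z where zQ: "z \<in> minset Q A"
      using minset_nonempty[OF \<open>tpo W Q\<close> finite_subset[OF \<open>A \<subseteq> W\<close> \<open>finite W\<close>] \<open>A \<subseteq> W\<close>]
        \<open>x \<in> A\<close> by blast
    then have "z \<in> A" "z \<in> W"
      using minset_subset[of Q A] \<open>A \<subseteq> W\<close> by blast+
    have "(x, z) \<notin> Q" "(y, z) \<notin> Q"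
      using minset_closed_below[OF \<open>tpo W Q\<close> zQ \<open>x \<in> A\<close>]
        minset_closed_below[OF \<open>tpo W Q\<close> zQ \<open>y \<in> A\<close>]
        \<open>x \<notin> minset Q A\<close> \<open>y \<notin> minset Q A\<close> by blast+
    moreover have "(x, z) \<in> P" "(y, z) \<in> P"
      using minsetD[OF xP \<open>z \<in> A\<close>] minsetD[OF yP \<open>z \<in> A\<close>] by blast+
    moreover have "(x \<in> S \<longleftrightarrow> y \<in> S) \<longrightarrow> (x, y) \<in> Q"
      using agree[OF \<open>x \<in> W\<close> \<open>y \<in> W\<close>] \<open>(x, y) \<in> P\<close> by blast
    ultimately show False
      using agree[OF \<open>x \<in> W\<close> \<open>z \<in> W\<close>] agree[OF \<open>y \<in> W\<close> \<open>z \<in> W\<close>]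
        below_y[OF \<open>x \<in> A\<close>] xR by blast
  qed
  moreover have "minset Q A \<subseteq> minset R A"
  proof
    fix w
    assume "w \<in> minset Q A"
    then show "w \<in> minset R A"
      using below_y minsetD[of w Q A y] \<open>y \<in> A\<close> minset_subset[of Q A] by blast
  qed
  ultimately show ?thesis by blast
qed

definition minset_decomposes :: "'a set \<Rightarrow> 'a rel \<Rightarrow> 'a rel \<Rightarrow> 'a rel \<Rightarrow> bool" where
  "minset_decomposes W R1 R2 R \<longleftrightarrow> (\<forall>A\<subseteq>W. minset R A
     = (\<Union>j\<in>{j \<in> {1, 2}. minset (sel R1 R2 j) A \<subseteq> minset R A}. minset (sel R1 R2 j) A))"

lemma minset_decomposesD:
  "minset_decomposes W R1 R2 R \<Longrightarrow> A \<subseteq> W \<Longrightarrow> minset R A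
    = (\<Union>j\<in>{j \<in> {1, 2}. minset (sel R1 R2 j) A \<subseteq> minset R A}. minset (sel R1 R2 j) A)"
  unfolding minset_decomposes_def by blast

lemma minset_decomposes_if_SPU_WPU:
  assumes "tpo W R1" and "tpo W R2" and "tpo W R" and "finite W"
    and "variants W S R1 R2" and "SPU_pair W R1 R2 R" and "WPU_pair W R1 R2 R"
  shows "minset_decomposes W R1 R2 R"
  unfolding minset_decomposes_def
proof (intro allI impI equalityI subsetI)
  fix A y
  assume "A \<subseteq> W" and y: "y \<in> minset R A"
  have agree: "(x, y) \<in> R1 \<longleftrightarrow> (x, y) \<in> R2"
    if "x \<in> W" "y \<in> W" "x \<in> S \<longleftrightarrow> y \<in> S" for x y
    using variantsD[OF \<open>variants W S R1 R2\<close> that] .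
  have WPU: "(x, y) \<in> R \<or> (z, y) \<in> R"
    if "x \<in> W" "y \<in> W" "z \<in> W" "(x, y) \<in> R1 \<and> (z, y) \<in> R2 \<or> (x, y) \<in> R2 \<and> (z, y) \<in> R1"
    for x y z
    using \<open>WPU_pair W R1 R2 R\<close> that unfolding WPU_pair_def by blast
  have "y \<in> minset R1 A \<and> minset R1 A \<subseteq> minset R A \<or> y \<in> minset R2 A \<and> minset R2 A \<subseteq> minset R A"
  proof (cases "y \<in> minset R1 A")
    case True
    then show ?thesis
      using minset_other_subset_if_WPU[OF assms(1-4) \<open>A \<subseteq> W\<close> agree WPU y True] by blast
  next
    case False
    then have "y \<in> minset R2 A"
      using minset_subset_Un_if_SPU[OF assms(1,2) \<open>A \<subseteq> W\<close> assms(6)] y by blast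
    then show ?thesis
      using minset_other_subset_if_WPU[OF assms(2,1,3,4) \<open>A \<subseteq> W\<close>, of S, OF _ WPU y] agree
      by blast
  qed
  then show "y \<in> (\<Union>j\<in>{j \<in> {1, 2}. minset (sel R1 R2 j) A \<subseteq> minset R A}. minset (sel R1 R2 j) A)"
    by (auto simp: sel_def)
qed blast

primrec tpo_rem :: "'a rel \<Rightarrow> 'a set \<Rightarrow> nat \<Rightarrow> 'a set" where
  "tpo_rem R A 0 = A"
| "tpo_rem R A (Suc n) = tpo_rem R A n - minset R (tpo_rem R A n)"

lemma tpo_rem_subset: "tpo_rem R A n \<subseteq> A"
  by (induction n) auto

definition greedy_schedule :: "'a set \<Rightarrow> 'a rel \<Rightarrow> 'a rel \<Rightarrow> 'a rel \<Rightarrow> nat \<Rightarrow> nat set" where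
  "greedy_schedule W R1 R2 R i = {j \<in> {1, 2}.
     minset (sel R1 R2 j) (tpo_rem R W (i - 1)) \<subseteq> minset R (tpo_rem R W (i - 1))}"

lemma tq_rem_greedy_schedule:
  assumes "minset_decomposes W R1 R2 R"
  shows "tq_rem W R1 R2 (greedy_schedule W R1 R2 R) n = tpo_rem R W n"
proof (induction n)
  case (Suc n)
  then show ?case
    using minset_decomposesD[OF assms tpo_rem_subset[of R W n]]
    by (simp add: greedy_schedule_def)
qed simp

lemma tq_rank_greedy_schedule:
  assumes "minset_decomposes W R1 R2 R"
  shows "tq_rank W R1 R2 (greedy_schedule W R1 R2 R) i
    = minset R (tq_rem W R1 R2 (greedy_schedule W R1 R2 R) (i - 1))"
proof -
  have "tq_rem W R1 R2 (greedy_schedule W R1 R2 R) (i - 1) = tpo_rem R W (i - 1)"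
    using assms by (rule tq_rem_greedy_schedule)
  then show ?thesis
    using minset_decomposesD[OF assms tpo_rem_subset[of R W "i - 1"]]
    by (simp add: tq_rank_def greedy_schedule_def)
qed

lemma queue_schedule_greedy_schedule:
  assumes "minset_decomposes W R1 R2 R"
    and "tpo W R" and "finite W" and "minset R W = minset R1 W \<union> minset R2 W"
  shows "queue_schedule (greedy_schedule W R1 R2 R)"
proof -
  have "greedy_schedule W R1 R2 R i \<noteq> {}" for i
  proof (cases "tpo_rem R W (i - 1) = {}")
    case True
    then show ?thesis
      by (auto simp: greedy_schedule_def minset_def)
  next
    case False
    then have "minset R (tpo_rem R W (i - 1)) \<noteq> {}"
      using minset_nonempty[OF \<open>tpo W R\<close> finite_subset[OF tpo_rem_subset \<open>finite W\<close>] tpo_rem_subset]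
      by blast
    then show ?thesis
      using minset_decomposesD[OF assms(1) tpo_rem_subset[of R W "i - 1"]]
      unfolding greedy_schedule_def by auto
  qed
  moreover have "greedy_schedule W R1 R2 R 1 = {1, 2}"
    using \<open>minset R W = minset R1 W \<union> minset R2 W\<close> by (auto simp: greedy_schedule_def sel_def)
  ultimately show ?thesis
    unfolding queue_schedule_def greedy_schedule_def by blast
qed

lemma tq_rem_reaches_empty:
  assumes "queue_schedule a" and "tpo W R1" and "tpo W R2" and "finite W"
  shows "\<exists>n. tq_rem W R1 R2 a n = {}"
proof (rule decreasing_chain_reaches_empty)
  fix n
  assume nonempty: "tq_rem W R1 R2 a n \<noteq> {}"
  have "a (Suc n) \<noteq> {} \<and> a (Suc n) \<subseteq> {1, 2}"
    using \<open>queue_schedule a\<close> unfolding queue_schedule_def by simp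
  then obtain k where "k \<in> a (Suc n)" "k \<in> {1, 2}"
    by blast
  then have "tpo W (sel R1 R2 k)"
    using assms(2,3) by (auto simp: sel_def)
  then have "minset (sel R1 R2 k) (tq_rem W R1 R2 a n) \<noteq> {}"
    using minset_nonempty[OF _ finite_subset[OF tq_rem_subset \<open>finite W\<close>] tq_rem_subset nonempty]
    by blast
  moreover have "minset (sel R1 R2 k) (tq_rem W R1 R2 a n) \<subseteq> tq_rank W R1 R2 a (Suc n)"
    using minset_sel_subset_tq_rank[of k a "Suc n" R1 R2 W] \<open>k \<in> a (Suc n)\<close> by simp
  ultimately show "tq_rem W R1 R2 a (Suc n) \<subset> tq_rem W R1 R2 a n"
    using minset_subset[of "sel R1 R2 k" "tq_rem W R1 R2 a n"] unfolding tq_rem_Suc by blast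
qed (use \<open>finite W\<close> in simp)

lemma tq_order_eq_if_ranks_minset:
  assumes "tpo W R" and cover: "covers_at W R1 R2 a m"
    and rank: "\<And>i. tq_rank W R1 R2 a i = minset R (tq_rem W R1 R2 a (i - 1))"
  shows "R = tq_order W R1 R2 a m"
proof (intro set_eqI iffI)
  fix p
  assume "p \<in> R"
  then obtain x y where p: "p = (x, y)" "(x, y) \<in> R" "x \<in> W" "y \<in> W"
    using tpo_subset[OF \<open>tpo W R\<close>] by (cases p) blast
  obtain i where i: "1 \<le> i" "i \<le> m" "x \<in> tq_rank W R1 R2 a i"
    using cover \<open>x \<in> W\<close> by (rule covers_atE)
  obtain j where j: "1 \<le> j" "j \<le> m" "y \<in> tq_rank W R1 R2 a j"
    using cover \<open>y \<in> W\<close> by (rule covers_atE)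
  have "i \<le> j"
  proof (rule ccontr)
    assume "\<not> i \<le> j"
    then have "tq_rem W R1 R2 a (i - 1) \<subseteq> tq_rem W R1 R2 a (j - 1)"
      by (intro tq_rem_antimono) simp
    then have "x \<in> tq_rem W R1 R2 a (j - 1)"
      using i(3) tq_rank_subset_rem[of W R1 R2 a i] by blast
    then have "x \<in> tq_rank W R1 R2 a j"
      using minset_closed_below[OF \<open>tpo W R\<close> _ _ \<open>(x, y) \<in> R\<close>] j(3) unfolding rank by blast
    then show False
      using tq_rank_unique[OF i(1) j(1) i(3)] \<open>\<not> i \<le> j\<close> by simp
  qed
  then show "p \<in> tq_order W R1 R2 a m"
    unfolding p(1) using mem_tq_order_iff[OF i(1,2) j(1,2) i(3) j(3)] by blast
next
  fix p
  assume "p \<in> tq_order W R1 R2 a m"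
  then obtain x y i j where p: "p = (x, y)" and "i \<le> j"
    and x: "x \<in> tq_rank W R1 R2 a i" and y: "y \<in> tq_rank W R1 R2 a j"
    unfolding tq_order_def by blast
  have "tq_rem W R1 R2 a (j - 1) \<subseteq> tq_rem W R1 R2 a (i - 1)"
    using \<open>i \<le> j\<close> by (intro tq_rem_antimono) simp
  then have "y \<in> tq_rem W R1 R2 a (i - 1)"
    using y tq_rank_subset_rem[of W R1 R2 a j] by blast
  then show "p \<in> R"
    using x unfolding p rank by (blast intro: minsetD)
qed

lemma teamqueue_order_if_basic_SPU_WPU:
  assumes "tpo W R1" and "tpo W R2" and "tpo W R" and "finite W" and "variants W S R1 R2"
    and basic: "minset R W = minset R1 W \<union> minset R2 W"
    and "SPU_pair W R1 R2 R" and "WPU_pair W R1 R2 R"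
  shows "teamqueue_order W R1 R2 R"
proof -
  let ?a = "greedy_schedule W R1 R2 R"
  have decomposes: "minset_decomposes W R1 R2 R"
    using assms(1-5,7,8) by (rule minset_decomposes_if_SPU_WPU)
  have sched: "queue_schedule ?a"
    using decomposes assms(3,4) basic by (rule queue_schedule_greedy_schedule)
  obtain m where cover: "covers_at W R1 R2 ?a m" and least: "\<forall>m'<m. \<not> covers_at W R1 R2 ?a m'"
    using tq_rem_reaches_empty[OF sched assms(1,2,4)]
    unfolding covers_at_iff_tq_rem_empty exists_least_iff[of "\<lambda>n. tq_rem W R1 R2 ?a n = {}"] by blast
  have "R = tq_order W R1 R2 ?a m"
    using assms(3) cover tq_rank_greedy_schedule[OF decomposes] by (rule tq_order_eq_if_ranks_minset)
  with sched cover least show ?thesis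
    unfolding teamqueue_order_def by blast
qed

theorem proposition5:
  fixes W :: "'a set" and D :: "('a rel \<times> 'a rel) set" and f :: "'a rel \<Rightarrow> 'a rel \<Rightarrow> 'a rel"
  assumes "finite W" and "W \<noteq> {}"
    and "combinator W D f"
    and "D \<subseteq> Vpairs W"
  shows "teamqueue W D f \<longleftrightarrow> basic W D f \<and> SPU_plus W D f \<and> WPU_plus W D f"
proof -
  have "teamqueue_order W R1 R2 (f R1 R2) \<longleftrightarrow> minset (f R1 R2) W = minset R1 W \<union> minset R2 W
      \<and> SPU_pair W R1 R2 (f R1 R2) \<and> WPU_pair W R1 R2 (f R1 R2)"
    if pair: "(R1, R2) \<in> D" for R1 R2
  proof -
    obtain S where R1: "tpo W R1" and R2: "tpo W R2" and variants: "variants W S R1 R2"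
      using pair \<open>D \<subseteq> Vpairs W\<close> unfolding Vpairs_def by blast
    moreover have "tpo W (f R1 R2)"
      using pair \<open>combinator W D f\<close> unfolding combinator_def by blast
    ultimately show ?thesis
      using teamqueue_order_imp_basic_SPU_WPU[OF _ R1 R2 assms(1,2)]
        teamqueue_order_if_basic_SPU_WPU[OF R1 R2 _ assms(1) variants] by blast
  qed
  then show ?thesis
    unfolding teamqueue_iff_pairwise basic_def SPU_plus_iff_pairwise WPU_plus_iff_pairwise
      Ball_def split_paired_All prod.case by blast
qed

end
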